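(* Let $m,n,r,p,s$ be positive integers. Let $\mathbf{A}\in\mathbb{R}^{m\times n}$ and suppose $$\mathbf{A}=\mathbf{U}\mathbf{S}\mathbf{V}+\mathbf{E},$$ where $\mathbf{U}\in\mathbb{R}^{m\times r}$ has orthonormal columns ($\mathbf{U}^\top\mathbf{U}=\mathbf{I}_r$), $\mathbf{S}\in\mathbb{R}^{r\times r}$, $\mathbf{V}\in\mathbb{R}^{r\times n}$ has orthonormal rows ($\mathbf{V}\mathbf{V}^\top=\mathbf{I}_r$), and the error $\mathbf{E}\in\mathbb{R}^{m\times n}$ satisfies $\mathbf{U}^\top\mathbf{E}=\mathbf{0}$. Let $\mathbf{B}\in\mathbb{R}^{p\times n}$ be written as $$\mathbf{B}=\mathbf{P}\mathbf{V}+\mathbf{L}\mathbf{Q},$$ where $\mathbf{P}\in\mathbb{R}^{p\times r}$, $\mathbf{L}\in\mathbb{R}^{p\times s}$, and $\mathbf{Q}\in\mathbb{R}^{s\times n}$ has orthonormal rows ($\mathbf{Q}\mathbf{Q}^\top=\mathbf{I}_s$) with $\mathbf{V}\mathbf{Q}^\top=\mathbf{0}$. Define $$\mathbf{S}'=\begin{bmatrix}\mathbf{S}&\mathbf{0}\\ \mathbf{P}&\mathbf{L}\end{bmatrix}\in\mathbb{R}^{(r+p)\times(r+s)},$$ and let $\mathbf{U}'\in\mathbb{R}^{(r+p)\times q}$, $\tilde{\mathbf{S}}\in\mathbb{R}^{q\times q}$, $\mathbf{V}'\in\mathbb{R}^{q\times(r+s)}$ be any matrices (for some positive integer $q$), with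 $\mathbf{E}'=\mathbf{S}'-\mathbf{U}'\tilde{\mathbf{S}}\mathbf{V}'$. Set $$\tilde{\mathbf{A}}=\begin{bmatrix}\mathbf{A}\\ \mathbf{B}\end{bmatrix},\quad \tilde{\mathbf{U}}=\begin{bmatrix}\mathbf{U}&\mathbf{0}\\ \mathbf{0}&\mathbf{I}_p\end{bmatrix}\mathbf{U}',\quad \tilde{\mathbf{V}}=\mathbf{V}'\begin{bmatrix}\mathbf{V}\\ \mathbf{Q}\end{bmatrix}.$$ Then $$\|\tilde{\mathbf{A}}-\tilde{\mathbf{U}}\tilde{\mathbf{S}}\tilde{\mathbf{V}}\|_F^2=\|\mathbf{E}\|_F^2+\|\mathbf{E}'\|_F^2 = \|\mathbf{A}-\mathbf{U}\mathbf{S}\mathbf{V}\|_F^2+\|\mathbf{S}'-\mathbf{U}'\tilde{\mathbf{S}}\mathbf{V}'\|_F^2.$$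
   Context: $\|\cdot\|_F$ denotes the Frobenius norm; $\mathbf{I}_k$ is the $k\times k$ identity matrix and $\mathbf{0}$ denotes a zero matrix of the appropriate size. *)

theory Defs
  imports "Jordan_Normal_Form.Matrix"
begin

definition frobenius_norm :: "real mat \<Rightarrow> real" where
  "frobenius_norm A = sqrt (\<Sum>i<dim_row A. \<Sum>j<dim_col A. (A $$ (i,j))^2)"

end

theory Submission
  imports Defs
begin

text \<open>
  With W = diag(U, I) and Z = [V; Q] one has [A; B] = W S' Z + [E; 0], so the new residual is
  W E' Z + [E; 0]. Multiplying by W (orthonormal columns) on the left and by Z (orthonormal rows)
  on the right preserves the Frobenius norm, and W^T [E; 0] = 0 makes the two summands orthogonal
  for the Frobenius inner product; Pythagoras splits the squared norm accordingly.
\<close>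

definition frobenius_inner :: "real mat \<Rightarrow> real mat \<Rightarrow> real" where
  "frobenius_inner X Y = (\<Sum>i<dim_row X. \<Sum>j<dim_col X. X $$ (i,j) * Y $$ (i,j))"

lemma frobenius_norm_sq: "(frobenius_norm X)\<^sup>2 = frobenius_inner X X"
  unfolding frobenius_norm_def frobenius_inner_def
  by (subst real_sqrt_pow2) (auto intro!: sum_nonneg simp: power2_eq_square)

lemma frobenius_inner_commute:
  assumes "X \<in> carrier_mat a b" "Y \<in> carrier_mat a b"
  shows "frobenius_inner X Y = frobenius_inner Y X"
  using assms by (auto simp: frobenius_inner_def mult.commute)

lemma frobenius_inner_add_left:
  assumes "X \<in> carrier_mat a b" "Y \<in> carrier_mat a b" "Z \<in> carrier_mat a b"
  shows "frobenius_inner (X + Y) Z = frobenius_inner X Z + frobenius_inner Y Z"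
  using assms by (auto simp: frobenius_inner_def distrib_right sum.distrib)

lemma frobenius_inner_add_right:
  assumes "X \<in> carrier_mat a b" "Y \<in> carrier_mat a b" "Z \<in> carrier_mat a b"
  shows "frobenius_inner X (Y + Z) = frobenius_inner X Y + frobenius_inner X Z"
  using assms by (auto simp: frobenius_inner_def distrib_left sum.distrib)

lemma frobenius_inner_zero_left [simp]: "frobenius_inner (0\<^sub>m a b) X = 0"
  by (simp add: frobenius_inner_def)

lemma frobenius_inner_mult_left:
  assumes X: "X \<in> carrier_mat a b" and W: "W \<in> carrier_mat a c" and Y: "Y \<in> carrier_mat c b"
  shows "frobenius_inner X (W * Y) = frobenius_inner (transpose_mat W * X) Y"
proof -
  have "frobenius_inner X (W * Y) = (\<Sum>i<a. \<Sum>j<b. \<Sum>k<c. X $$ (i,j) * W $$ (i,k) * Y $$ (k,j))"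
    using X W Y
    by (auto simp: frobenius_inner_def scalar_prod_def sum_distrib_left lessThan_atLeast0 mult.assoc
        intro!: sum.cong)
  also have "\<dots> = (\<Sum>k<c. \<Sum>j<b. \<Sum>i<a. X $$ (i,j) * W $$ (i,k) * Y $$ (k,j))"
    by (subst sum.swap, subst (1 2) sum.swap) simp
  also have "\<dots> = frobenius_inner (transpose_mat W * X) Y"
    using X W Y
    by (auto simp: frobenius_inner_def scalar_prod_def sum_distrib_left lessThan_atLeast0 ac_simps
        intro!: sum.cong)
  finally show ?thesis .
qed

lemma frobenius_inner_mult_right:
  assumes X: "X \<in> carrier_mat a b" and Y: "Y \<in> carrier_mat a c" and Z: "Z \<in> carrier_mat c b"
  shows "frobenius_inner X (Y * Z) = frobenius_inner (X * transpose_mat Z) Y"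
proof -
  have "frobenius_inner X (Y * Z) = (\<Sum>i<a. \<Sum>j<b. \<Sum>k<c. X $$ (i,j) * Z $$ (k,j) * Y $$ (i,k))"
    using X Y Z
    by (auto simp: frobenius_inner_def scalar_prod_def sum_distrib_left lessThan_atLeast0 ac_simps
        intro!: sum.cong)
  also have "\<dots> = (\<Sum>i<a. \<Sum>k<c. \<Sum>j<b. X $$ (i,j) * Z $$ (k,j) * Y $$ (i,k))"
    by (intro sum.cong refl sum.swap)
  also have "\<dots> = frobenius_inner (X * transpose_mat Z) Y"
    using X Y Z
    by (auto simp: frobenius_inner_def scalar_prod_def sum_distrib_right lessThan_atLeast0
        intro!: sum.cong)
  finally show ?thesis .
qed

lemma frobenius_norm_eq_sqrt_inner: "frobenius_norm X = sqrt (frobenius_inner X X)"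
  by (simp add: frobenius_norm_def frobenius_inner_def power2_eq_square)

lemma frobenius_norm_isometry_left:
  assumes X: "X \<in> carrier_mat c b" and W: "W \<in> carrier_mat a c"
    and WW: "transpose_mat W * W = 1\<^sub>m c"
  shows "frobenius_norm (W * X) = frobenius_norm X"
proof -
  have "frobenius_inner (W * X) (W * X) = frobenius_inner (transpose_mat W * (W * X)) X"
    using X W by (intro frobenius_inner_mult_left) auto
  also have "transpose_mat W * (W * X) = X"
    using X W WW by (subst assoc_mult_mat[symmetric]) auto
  finally show ?thesis
    by (simp add: frobenius_norm_eq_sqrt_inner)
qed

lemma frobenius_norm_isometry_right:
  assumes X: "X \<in> carrier_mat a c" and Z: "Z \<in> carrier_mat c b"
    and ZZ: "Z * transpose_mat Z = 1\<^sub>m c"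
  shows "frobenius_norm (X * Z) = frobenius_norm X"
proof -
  have "frobenius_inner (X * Z) (X * Z) = frobenius_inner (X * Z * transpose_mat Z) X"
    using X Z by (intro frobenius_inner_mult_right) auto
  also have "X * Z * transpose_mat Z = X"
    using X Z ZZ by (subst assoc_mult_mat) auto
  finally show ?thesis
    by (simp add: frobenius_norm_eq_sqrt_inner)
qed

lemma frobenius_norm_add_sq_orthogonal:
  assumes X: "X \<in> carrier_mat a b" and Y: "Y \<in> carrier_mat a b"
    and orth: "frobenius_inner X Y = 0"
  shows "(frobenius_norm (X + Y))\<^sup>2 = (frobenius_norm X)\<^sup>2 + (frobenius_norm Y)\<^sup>2"
proof -
  have "frobenius_inner Y X = 0"
    using orth frobenius_inner_commute[OF X Y] by simp
  with X Y orth show ?thesis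
    by (simp add: frobenius_norm_sq frobenius_inner_add_left[of _ a b] frobenius_inner_add_right[of _ a b])
qed

lemma frobenius_norm_sq_isometries_add_orthogonal:
  assumes W: "W \<in> carrier_mat a k" and WW: "transpose_mat W * W = 1\<^sub>m k"
    and Z: "Z \<in> carrier_mat l b" and ZZ: "Z * transpose_mat Z = 1\<^sub>m l"
    and X: "X \<in> carrier_mat k l"
    and F: "F \<in> carrier_mat a b" and WF: "transpose_mat W * F = 0\<^sub>m k b"
  shows "(frobenius_norm (W * X * Z + F))\<^sup>2 = (frobenius_norm X)\<^sup>2 + (frobenius_norm F)\<^sup>2"
proof -
  have WXZ: "W * X * Z = W * (X * Z)"
    using W X Z by simp
  have "frobenius_inner F (W * (X * Z)) = 0"
    using W X Z F WF by (simp add: frobenius_inner_mult_left[of _ a b])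
  then have "frobenius_inner (W * (X * Z)) F = 0"
    using W X Z F by (simp add: frobenius_inner_commute[of F a b])
  then have "(frobenius_norm (W * X * Z + F))\<^sup>2
      = (frobenius_norm (W * (X * Z)))\<^sup>2 + (frobenius_norm F)\<^sup>2"
    unfolding WXZ using W X Z F by (intro frobenius_norm_add_sq_orthogonal) auto
  also have "frobenius_norm (W * (X * Z)) = frobenius_norm X"
    using frobenius_norm_isometry_left[OF mult_carrier_mat[OF X Z] W WW]
      frobenius_norm_isometry_right[OF X Z ZZ] by simp
  finally show ?thesis .
qed

lemma frobenius_norm_zero [simp]: "frobenius_norm (0\<^sub>m a b) = 0"
  by (simp add: frobenius_norm_def)

lemma index_append_rows:
  assumes "X \<in> carrier_mat a n" "Y \<in> carrier_mat b n" "i < a + b" "j < n"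
  shows "(X @\<^sub>r Y) $$ (i, j) = (if i < a then X $$ (i, j) else Y $$ (i - a, j))"
  using assms by (simp add: append_rows_def)

lemma frobenius_norm_append_rows_sq:
  assumes X: "X \<in> carrier_mat a n" and Y: "Y \<in> carrier_mat b n"
  shows "(frobenius_norm (X @\<^sub>r Y))\<^sup>2 = (frobenius_norm X)\<^sup>2 + (frobenius_norm Y)\<^sup>2"
proof -
  define g where "g i = (\<Sum>j<n. (X @\<^sub>r Y) $$ (i, j) * (X @\<^sub>r Y) $$ (i, j))" for i
  have "frobenius_inner (X @\<^sub>r Y) (X @\<^sub>r Y) = sum g {0..<a} + sum g {a..<a + b}"
    using X Y carrier_matD[OF carrier_append_rows[OF X Y]]
    by (simp add: frobenius_inner_def g_def lessThan_atLeast0 sum.atLeastLessThan_concat)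
  also have "sum g {a..<a + b} = (\<Sum>i<b. g (i + a))"
    using sum.shift_bounds_nat_ivl[of g 0 a b] by (simp add: lessThan_atLeast0 add.commute)
  also have "sum g {0..<a} = frobenius_inner X X"
    using X Y by (auto simp: frobenius_inner_def g_def index_append_rows intro!: sum.cong)
  also have "(\<Sum>i<b. g (i + a)) = frobenius_inner Y Y"
    using X Y by (auto simp: frobenius_inner_def g_def index_append_rows intro!: sum.cong)
  finally show ?thesis
    by (simp add: frobenius_norm_sq)
qed

lemma append_rows_add:
  assumes "A1 \<in> carrier_mat a n" "A2 \<in> carrier_mat a n" "B1 \<in> carrier_mat b n" "B2 \<in> carrier_mat b n"
  shows "(A1 @\<^sub>r B1) + (A2 @\<^sub>r B2) = (A1 + A2) @\<^sub>r (B1 + B2)"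
  using assms by (intro eq_matI) (auto simp: append_rows_def)

lemma four_block_mat_mult_append_rows:
  assumes "A \<in> carrier_mat nr1 n1" "B \<in> carrier_mat nr1 n2"
    "C \<in> carrier_mat nr2 n1" "D \<in> carrier_mat nr2 n2"
    and "X \<in> carrier_mat n1 nc" "Y \<in> carrier_mat n2 nc"
  shows "four_block_mat A B C D * (X @\<^sub>r Y) = (A * X + B * Y) @\<^sub>r (C * X + D * Y)"
  using assms unfolding append_rows_def
  by (subst mult_four_block_mat[of _ nr1 n1 _ n2 _ nr2 _ _ nc _ 0]) auto

lemma append_rows_mult_transpose:
  assumes V: "V \<in> carrier_mat r n" and Q: "Q \<in> carrier_mat s n"
  shows "(V @\<^sub>r Q) * transpose_mat (V @\<^sub>r Q)
    = four_block_mat (V * transpose_mat V) (V * transpose_mat Q) (Q * transpose_mat V) (Q * transpose_mat Q)"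
proof -
  have "transpose_mat (V @\<^sub>r Q) = four_block_mat (transpose_mat V) (transpose_mat Q) (0\<^sub>m 0 r) (0\<^sub>m 0 s)"
    using V Q unfolding append_rows_def by (subst transpose_four_block_mat) auto
  then show ?thesis
    using V Q unfolding append_rows_def
    by (simp add: mult_four_block_mat[of _ r n _ 0 _ s _ _ r _ s])
qed

lemma transpose_block_diag_mat:
  assumes "U \<in> carrier_mat m r"
  shows "transpose_mat (four_block_mat U (0\<^sub>m m p) (0\<^sub>m p r) (1\<^sub>m p))
    = four_block_mat (transpose_mat U) (0\<^sub>m r p) (0\<^sub>m p m) (1\<^sub>m p)"
  using assms by (subst transpose_four_block_mat) auto

lemma block_diag_orthonormal_cols:
  fixes U :: "'a :: semiring_1 mat"
  assumes U: "U \<in> carrier_mat m r" and UU: "transpose_mat U * U = 1\<^sub>m r"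
  shows "transpose_mat (four_block_mat U (0\<^sub>m m p) (0\<^sub>m p r) (1\<^sub>m p))
    * four_block_mat U (0\<^sub>m m p) (0\<^sub>m p r) (1\<^sub>m p) = 1\<^sub>m (r + p)"
  using U UU unfolding transpose_block_diag_mat[OF U]
  by (subst mult_four_block_mat[of _ r m _ p _ p _ _ r _ p]; simp)

lemma transpose_block_diag_mult_append_zero:
  assumes U: "U \<in> carrier_mat m r" and E: "E \<in> carrier_mat m n"
    and UE: "transpose_mat U * E = 0\<^sub>m r n"
  shows "transpose_mat (four_block_mat U (0\<^sub>m m p) (0\<^sub>m p r) (1\<^sub>m p)) * (E @\<^sub>r 0\<^sub>m p n)
    = 0\<^sub>m (r + p) n"
  using U E UE unfolding transpose_block_diag_mat[OF U]
  by (subst four_block_mat_mult_append_rows[of _ r m _ p _ p _ _ n]) (auto simp: append_rows_def)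

lemma append_rows_orthonormal_rows:
  fixes V Q :: "'a :: comm_semiring_1 mat"
  assumes V: "V \<in> carrier_mat r n" and Q: "Q \<in> carrier_mat s n"
    and VV: "V * transpose_mat V = 1\<^sub>m r" and QQ: "Q * transpose_mat Q = 1\<^sub>m s"
    and VQ: "V * transpose_mat Q = 0\<^sub>m r s"
  shows "(V @\<^sub>r Q) * transpose_mat (V @\<^sub>r Q) = 1\<^sub>m (r + s)"
proof -
  have "Q * transpose_mat V = transpose_mat (V * transpose_mat Q)"
    using V Q by (simp add: transpose_mult[of V r n "transpose_mat Q" s])
  with VQ have "Q * transpose_mat V = 0\<^sub>m s r"
    by simp
  then show ?thesis
    using V Q VV QQ VQ by (simp add: append_rows_mult_transpose)
qed

lemma stacked_residual_factorization:
  fixes A B U S V E P L Q M :: "'a :: comm_ring_1 mat"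
  assumes U: "U \<in> carrier_mat m r" and S: "S \<in> carrier_mat r k" and V: "V \<in> carrier_mat k n"
    and E: "E \<in> carrier_mat m n" and P: "P \<in> carrier_mat p k" and L: "L \<in> carrier_mat p s"
    and Q: "Q \<in> carrier_mat s n" and M: "M \<in> carrier_mat (r + p) (k + s)"
    and A: "A = U * S * V + E" and B: "B = P * V + L * Q"
  defines "W \<equiv> four_block_mat U (0\<^sub>m m p) (0\<^sub>m p r) (1\<^sub>m p)"
    and "S' \<equiv> four_block_mat S (0\<^sub>m r s) P L"
  shows "(A @\<^sub>r B) - W * M * (V @\<^sub>r Q) = W * (S' - M) * (V @\<^sub>r Q) + (E @\<^sub>r 0\<^sub>m p n)"
proof -
  have W: "W \<in> carrier_mat (m + p) (r + p)" and S': "S' \<in> carrier_mat (r + p) (k + s)"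
    using U S P L by (auto simp: W_def S'_def)
  have VQ: "V @\<^sub>r Q \<in> carrier_mat (k + s) n"
    using V Q by simp
  have "S' * (V @\<^sub>r Q) = (S * V) @\<^sub>r B"
    using S V P L Q unfolding S'_def B
    by (subst four_block_mat_mult_append_rows[of _ r k _ s _ p _ _ n]) auto
  then have "W * S' * (V @\<^sub>r Q) = (U * S * V) @\<^sub>r B"
    using U S V B P L Q W S' unfolding W_def
    by (subst assoc_mult_mat[of _ "m + p" "r + p" _ "k + s" _ n])
      (auto simp: four_block_mat_mult_append_rows[of _ m r _ p _ p _ _ n])
  moreover have "(A @\<^sub>r B) = ((U * S * V) @\<^sub>r B) + (E @\<^sub>r 0\<^sub>m p n)"
    using U S V E P L Q B unfolding A by (subst append_rows_add[of _ m n _ _ p]) auto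
  moreover have "W * (S' - M) * (V @\<^sub>r Q) = W * S' * (V @\<^sub>r Q) - W * M * (V @\<^sub>r Q)"
    using W S' M VQ
    by (simp add: mult_minus_distrib_mat[of W _ "r + p" S'] minus_mult_distrib_mat[of _ "m + p" "k + s"])
  moreover have "(U * S * V) @\<^sub>r B \<in> carrier_mat (m + p) n" "E @\<^sub>r 0\<^sub>m p n \<in> carrier_mat (m + p) n"
    using U S V E P L Q B by auto
  ultimately show ?thesis
    using W M VQ by (intro eq_matI) (auto dest!: carrier_matD)
qed

theorem mainTheorem1:
  fixes m n r p s q :: nat
    and A U S V E B P L Q U' St V' :: "real mat"
  assumes "0 < m" "0 < n" "0 < r" "0 < p" "0 < s" "0 < q"
    and "A \<in> carrier_mat m n"
    and "U \<in> carrier_mat m r" and "S \<in> carrier_mat r r" and "V \<in> carrier_mat r n"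
    and "E \<in> carrier_mat m n"
    and "A = U * S * V + E"
    and "transpose_mat U * U = 1\<^sub>m r"
    and "V * transpose_mat V = 1\<^sub>m r"
    and "transpose_mat U * E = 0\<^sub>m r n"
    and "B \<in> carrier_mat p n"
    and "P \<in> carrier_mat p r" and "L \<in> carrier_mat p s" and "Q \<in> carrier_mat s n"
    and "B = P * V + L * Q"
    and "Q * transpose_mat Q = 1\<^sub>m s"
    and "V * transpose_mat Q = 0\<^sub>m r s"
    and "U' \<in> carrier_mat (r + p) q" and "St \<in> carrier_mat q q" and "V' \<in> carrier_mat q (r + s)"
  shows "let S' = four_block_mat S (0\<^sub>m r s) P L;
             E' = S' - U' * St * V';
             At = A @\<^sub>r B;
             Ut = four_block_mat U (0\<^sub>m m p) (0\<^sub>m p r) (1\<^sub>m p) * U';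
             Vt = V' * (V @\<^sub>r Q)
         in (frobenius_norm (At - Ut * St * Vt))^2
              = (frobenius_norm E)^2 + (frobenius_norm E')^2
          \<and> (frobenius_norm E)^2 + (frobenius_norm E')^2
              = (frobenius_norm (A - U * S * V))^2 + (frobenius_norm (S' - U' * St * V'))^2"
proof -
  define W where "W = four_block_mat U (0\<^sub>m m p) (0\<^sub>m p r) (1\<^sub>m p)"
  define S' where "S' = four_block_mat S (0\<^sub>m r s) P L"
  define M where "M = U' * St * V'"
  define Z where "Z = V @\<^sub>r Q"
  have W: "W \<in> carrier_mat (m + p) (r + p)" and Z: "Z \<in> carrier_mat (r + s) n"
    and S': "S' \<in> carrier_mat (r + p) (r + s)" and M: "M \<in> carrier_mat (r + p) (r + s)"
    and E0: "E @\<^sub>r 0\<^sub>m p n \<in> carrier_mat (m + p) n"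
    using assms by (auto simp: W_def Z_def S'_def M_def)
  have WW: "transpose_mat W * W = 1\<^sub>m (r + p)"
    using assms unfolding W_def by (intro block_diag_orthonormal_cols) auto
  have ZZ: "Z * transpose_mat Z = 1\<^sub>m (r + s)"
    using assms unfolding Z_def by (intro append_rows_orthonormal_rows) auto
  have WE0: "transpose_mat W * (E @\<^sub>r 0\<^sub>m p n) = 0\<^sub>m (r + p) n"
    using assms unfolding W_def by (intro transpose_block_diag_mult_append_zero) auto
  have "W * U' * St * (V' * Z) = W * M * Z"
    using assms W Z unfolding M_def
    by (simp add: assoc_mult_mat[of _ "m + p" q _ "r + s" _ n] assoc_mult_mat[of W "m + p" "r + p" _ "r + s"]
        assoc_mult_mat[of W "m + p" "r + p" _ q _ n] assoc_mult_mat[of U' "r + p" q _ "r + s" _ n]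
        assoc_mult_mat[of U' "r + p" q _ q _ n])
  moreover have "(A @\<^sub>r B) - W * M * Z = W * (S' - M) * Z + (E @\<^sub>r 0\<^sub>m p n)"
    unfolding W_def S'_def Z_def using assms M by (intro stacked_residual_factorization) auto
  moreover have "(frobenius_norm (W * (S' - M) * Z + (E @\<^sub>r 0\<^sub>m p n)))\<^sup>2
      = (frobenius_norm (S' - M))\<^sup>2 + (frobenius_norm (E @\<^sub>r 0\<^sub>m p n))\<^sup>2"
    using S' M by (intro frobenius_norm_sq_isometries_add_orthogonal[OF W WW Z ZZ _ E0 WE0]) auto
  moreover have "(frobenius_norm (E @\<^sub>r 0\<^sub>m p n))\<^sup>2 = (frobenius_norm E)\<^sup>2"
    using assms by (simp add: frobenius_norm_append_rows_sq[of _ m n _ p])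
  moreover have "A - U * S * V = E"
    using assms by (intro eq_matI) auto
  ultimately show ?thesis
    by (simp add: Let_def W_def S'_def M_def Z_def)
qed

end
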